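(* Let $p$ be a prime and $n=p^{d_1}+\cdots+p^{d_k}$ with integers $0\le d_1<\cdots<d_k$ and $k>1$. Let \[ P:=\Bigl\{\overline{U}: \emptyset\ne U\subsetneq\{p^{d_1},\ldots,p^{d_k}\}\Bigr\}, \] where $\overline U$ is the sum of the elements of $U$, partially ordered by $\overline U\preccurlyeq\overline V$ iff $U\subseteq V$. For $T\subseteq P$ (viewed as a subposet), let $\chi(T)$ be the number of chains in $T$ of even cardinality minus the number of chains in $T$ of odd cardinality (the empty chain counts as a chain of cardinality $0$). Then \[ c_{p,i}(n)=\begin{cases} 2^{n-2^k+1}\,|\{T\subseteq P:\chi(T)\equiv i\pmod p\}| & \text{if } p=2 \text{ or } i=0,\\ 2^{n-2^k}\,|\{T\subseteq P:\chi(T)\equiv i \text{ or } \chi(T)\equiv -i\pmod p\}| & \text{if } p>2 \text{ and } i\in\{1,\ldots,p-1\}.\end{cases} \]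
   Context: For a permutation $w$ of $[n]$, $D(w)=\{i\in[n-1]: w(i)>w(i+1)\}$. A composition $\alpha=(\alpha_1,\ldots,\alpha_\ell)$ of $n$ (written $\alpha\models n$) is a sequence of positive integers with sum $n$, with descent set $D(\alpha)=\{\alpha_1,\alpha_1+\alpha_2,\ldots,\alpha_1+\cdots+\alpha_{\ell-1}\}$. The ribbon number is $r_\alpha=|\{w\in\mathfrak{S}_n: D(w)=D(\alpha)\}|$, and for $i\in\mathbb{Z}_p$, $c_{p,i}(n)=|\{\alpha\models n: r_\alpha\equiv i\pmod p\}|$. A chain in a poset is a subset whose elements are pairwise comparable. *)

theory Defs
  imports "HOL-Combinatorics.Permutations" "HOL-Number_Theory.Cong"
begin

definition perm_descents :: "nat \<Rightarrow> (nat \<Rightarrow> nat) \<Rightarrow> nat set" where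
  "perm_descents n w = {i \<in> {1..<n}. w i > w (Suc i)}"

definition compositions :: "nat \<Rightarrow> nat list set" where
  "compositions n = {\<alpha>. (\<forall>a\<in>set \<alpha>. 0 < a) \<and> sum_list \<alpha> = n}"

definition comp_descents :: "nat list \<Rightarrow> nat set" where
  "comp_descents \<alpha> = {sum_list (take j \<alpha>) | j. 1 \<le> j \<and> j < length \<alpha>}"

definition ribbon :: "nat list \<Rightarrow> nat" where
  "ribbon \<alpha> = card {w. w permutes {1..sum_list \<alpha>} \<and>
      perm_descents (sum_list \<alpha>) w = comp_descents \<alpha>}"

definition c_count :: "nat \<Rightarrow> nat \<Rightarrow> nat \<Rightarrow> nat" where
  "c_count p i n = card {\<alpha> \<in> compositions n. [ribbon \<alpha> = i] (mod p)}"

definition Pset :: "nat set \<Rightarrow> nat set" where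
  "Pset S = {\<Sum>U | U. U \<noteq> {} \<and> U \<subset> S}"

definition Ple :: "nat set \<Rightarrow> nat \<Rightarrow> nat \<Rightarrow> bool" where
  "Ple S x y \<longleftrightarrow> (\<exists>U V. U \<noteq> {} \<and> U \<subset> S \<and> V \<noteq> {} \<and> V \<subset> S \<and>
      x = \<Sum>U \<and> y = \<Sum>V \<and> U \<subseteq> V)"

definition is_chain_in :: "nat set \<Rightarrow> nat set \<Rightarrow> nat set \<Rightarrow> bool" where
  "is_chain_in S T C \<longleftrightarrow> C \<subseteq> T \<and> (\<forall>x\<in>C. \<forall>y\<in>C. Ple S x y \<or> Ple S y x)"

definition chi :: "nat set \<Rightarrow> nat set \<Rightarrow> int" where
  "chi S T = (\<Sum>C \<in> {C. is_chain_in S T C}. (-1) ^ card C)"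

end

(* Let Q be the set of the powers p^d_j, so that n is the sum of Q. A composition of n is
   determined by its descent set D, a subset of {1..<n}, and its ribbon number counts the
   permutations with descent set exactly D. By inclusion-exclusion this is an alternating sum,
   over T contained in D, of the numbers of permutations with descents inside T; the latter are
   multinomial coefficients, i.e. products of binomial coefficients with upper index n and
   smaller. As n has base-p digits 0 and 1 only, Lucas' theorem makes each factor 0 or 1 modulo
   p, and the product is 1 exactly when T is the set of sums of a chain of subsets of Q, i.e. a
   chain of the poset P. Hence the ribbon number is congruent to (-1)^|D| chi(D inter P).
   Splitting D into its parts inside and outside P gives the count: for p = 2 or i = 0 the sign
   is irrelevant, and otherwise the parity of the part outside P, which is nonempty for odd p,
   decides between i and -i, each occurring for half of its choices. *)

theory Submission
  imports Defs "HOL-Combinatorics.Multiset_Permutations"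
begin

definition powers_of :: "nat \<Rightarrow> nat set \<Rightarrow> bool" where
  "powers_of p U \<longleftrightarrow> finite U \<and> U \<subseteq> range ((^) p)"

definition subset_sums :: "nat set \<Rightarrow> nat set" where
  "subset_sums U = Sum ` Pow U"

lemma powers_of_subset: "powers_of p U \<Longrightarrow> V \<subseteq> U \<Longrightarrow> powers_of p V"
  unfolding powers_of_def by (auto intro: finite_subset)

lemma powers_of_insert_iff: "powers_of p (insert x U) \<longleftrightarrow> (\<exists>d. x = p ^ d) \<and> powers_of p U"
  unfolding powers_of_def by auto

lemma powers_of_pos: "powers_of p U \<Longrightarrow> 0 < p \<Longrightarrow> x \<in> U \<Longrightarrow> 0 < x"
  unfolding powers_of_def by auto

lemma Sum_powers_of_pos: "powers_of p U \<Longrightarrow> 0 < p \<Longrightarrow> U \<noteq> {} \<Longrightarrow> 0 < \<Sum>U"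
  by (intro sum_pos) (auto simp: powers_of_def)

lemma member_le_Sum: "finite U \<Longrightarrow> (x::nat) \<in> U \<Longrightarrow> x \<le> \<Sum>U"
  by (rule member_le_sum) auto

lemma power_less_power_imp_mult_le:
  fixes p :: nat
  assumes "2 \<le> p" "p ^ e < p ^ g"
  shows "p * p ^ e \<le> p ^ g"
proof -
  have "e < g" using assms by (simp add: power_strict_increasing_iff)
  then have "p ^ Suc e \<le> p ^ g" using assms(1) by (intro power_increasing) auto
  then show ?thesis by simp
qed

lemma sum_powers_less_power:
  fixes p :: nat
  assumes "2 \<le> p"
  shows "(\<Sum>d<e. p ^ d) < p ^ e"
proof (induction e)
  case (Suc e)
  have "(\<Sum>d<Suc e. p ^ d) = (\<Sum>d<e. p ^ d) + p ^ e" by simp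
  also have "\<dots> < 2 * p ^ e" using Suc.IH by simp
  also have "\<dots> \<le> p ^ Suc e" using assms by simp
  finally show ?case .
qed simp

lemma Sum_powers_of_less:
  assumes "2 \<le> p" "powers_of p U" "\<forall>x\<in>U. x < p ^ e"
  shows "\<Sum>U < p ^ e"
proof -
  have inj: "inj_on ((^) p) {..<e}"
    using assms(1) by (auto intro: inj_onI simp: power_inject_exp)
  have "U \<subseteq> (^) p ` {..<e}"
  proof
    fix x assume "x \<in> U"
    moreover obtain d where "x = p ^ d" using \<open>x \<in> U\<close> assms(2) by (auto simp: powers_of_def)
    ultimately show "x \<in> (^) p ` {..<e}" using assms by auto
  qed
  then have "\<Sum>U \<le> \<Sum>((^) p ` {..<e})" by (intro sum_mono2) auto
  also have "\<dots> = (\<Sum>d<e. p ^ d)" using sum.reindex[OF inj, of id] by simp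
  also have "\<dots> < p ^ e" using sum_powers_less_power[OF assms(1)] .
  finally show ?thesis .
qed

lemma Sum_powers_of_less_mult_Max:
  assumes "2 \<le> p" "powers_of p U" "U \<noteq> {}"
  shows "\<Sum>U < p * Max U"
proof -
  have "finite U" using assms(2) by (simp add: powers_of_def)
  then have "Max U \<in> U" using assms(3) by simp
  then obtain e where e: "Max U = p ^ e" using assms(2) by (auto simp: powers_of_def)
  have "\<forall>x\<in>U. x < p ^ Suc e"
  proof
    fix x assume "x \<in> U"
    then have "x \<le> p ^ e" using \<open>finite U\<close> e by (metis Max_ge)
    also have "p ^ e < p ^ Suc e" using assms(1) by simp
    finally show "x < p ^ Suc e" .
  qed
  then have "\<Sum>U < p ^ Suc e" by (rule Sum_powers_of_less[OF assms(1,2)])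
  then show ?thesis using e by simp
qed

lemma Sum_powers_of_less_if_Max_less:
  assumes "2 \<le> p" "powers_of p U" "powers_of p V" "U \<noteq> {}" "V \<noteq> {}" "Max U < Max V"
  shows "\<Sum>U < \<Sum>V"
proof -
  have "finite V" using assms(3) by (simp add: powers_of_def)
  have "Max U \<in> U" "Max V \<in> V" using assms(2-5) by (auto simp: powers_of_def)
  then have "Max U \<in> range ((^) p)" "Max V \<in> range ((^) p)" using assms(2,3) by (auto simp: powers_of_def)
  then obtain e g where "Max U = p ^ e" "Max V = p ^ g" by blast
  then have "p * Max U \<le> Max V" using power_less_power_imp_mult_le[OF assms(1)] assms(6) by simp
  then show ?thesis
    using Sum_powers_of_less_mult_Max[OF assms(1,2,4)] member_le_Sum[OF \<open>finite V\<close> \<open>Max V \<in> V\<close>]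
    by linarith
qed

text \<open>The largest element of \<open>U\<close> is the largest power of \<open>p\<close> not exceeding \<open>\<Sum>U\<close>.\<close>
lemma Sum_powers_of_eq_iff:
  assumes "2 \<le> p" "powers_of p U" "powers_of p V"
  shows "\<Sum>U = \<Sum>V \<longleftrightarrow> U = V"
proof
  have "finite U" using assms(2) by (simp add: powers_of_def)
  then show "\<Sum>U = \<Sum>V \<Longrightarrow> U = V"
    using assms(2,3)
  proof (induction U arbitrary: V rule: finite_linorder_max_induct)
    case empty
    then show ?case using Sum_powers_of_pos[of p V] assms(1) by fastforce
  next
    case (insert m U)
    have "finite V" using insert.prems(3) by (simp add: powers_of_def)
    have "m \<notin> U" using insert.hyps(2) by blast
    have "V \<noteq> {}"
      using insert.prems Sum_powers_of_pos[OF insert.prems(2)] assms(1) by fastforce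
    have "Max (insert m U) = m" by (rule Max_insert2) (use insert.hyps in auto)
    moreover have "\<not> Max (insert m U) < Max V" "\<not> Max V < Max (insert m U)"
      using Sum_powers_of_less_if_Max_less[OF assms(1)] insert.prems \<open>V \<noteq> {}\<close>
      by (metis insert_not_empty less_irrefl)+
    ultimately have "m \<in> V" using Max_in[OF \<open>finite V\<close> \<open>V \<noteq> {}\<close>] by fastforce
    then have "\<Sum>(V - {m}) = \<Sum>U"
      using insert.prems(1) insert.hyps(1) \<open>m \<notin> U\<close> \<open>finite V\<close> by (simp add: sum_diff1_nat)
    then have "U = V - {m}"
      using insert.IH insert.prems(2,3) powers_of_subset by (metis Diff_subset subset_insertI)
    then show ?case using \<open>m \<in> V\<close> by blast
  qed
qed simp

lemma subset_sums_insert: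
  assumes "finite U" "m \<notin> U"
  shows "subset_sums (insert m U) = subset_sums U \<union> (+) m ` subset_sums U"
proof -
  have "Sum ` insert m ` Pow U = (+) m ` Sum ` Pow U"
    unfolding image_image
  proof (rule image_cong[OF refl])
    fix V assume "V \<in> Pow U"
    then show "\<Sum>(insert m V) = m + \<Sum>V" using assms by (subst sum.insert) (auto intro: finite_subset)
  qed
  then show ?thesis by (simp add: subset_sums_def Pow_insert image_Un)
qed

lemma subset_sums_le_Sum: "finite U \<Longrightarrow> x \<in> subset_sums U \<Longrightarrow> x \<le> \<Sum>U"
  unfolding subset_sums_def by (auto intro: sum_mono2)

lemma prime_dvd_choose_prime_power:
  assumes "prime p" "0 < k" "k < p ^ d"
  shows "p dvd (p ^ d choose k)"
proof (rule ccontr)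
  assume "\<not> p dvd (p ^ d choose k)"
  then have "coprime (p ^ d) (p ^ d choose k)" using assms(1) by (simp add: prime_imp_coprime)
  moreover have "p ^ d dvd k * (p ^ d choose k)"
    using times_binomial_minus1_eq[OF assms(2), of "p ^ d"] by simp
  ultimately have "p ^ d dvd k" using coprime_dvd_mult_left_iff by blast
  then show False using assms(2,3) by (simp add: dvd_imp_le leD)
qed

text \<open>Vandermonde's identity, where all middle terms of the row \<open>p ^ d\<close> vanish modulo \<open>p\<close>.\<close>
lemma choose_add_prime_power_cong:
  assumes "prime p"
  shows "[(a + p ^ d) choose b = (a choose b) + (if p ^ d \<le> b then a choose (b - p ^ d) else 0)] (mod p)"
proof -
  define g where "g k = (p ^ d choose k) * (a choose (b - k))" for k
  define M where "M = {..b} - {0, p ^ d}"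
  have "p ^ d \<noteq> 0" using assms by (simp add: prime_gt_0_nat)
  have "(a + p ^ d) choose b = (\<Sum>k\<le>b. g k)"
    unfolding g_def using vandermonde[of "p ^ d" a b] by (simp add: add.commute)
  also have "\<dots> = (\<Sum>k\<in>{..b} \<inter> {0, p ^ d}. g k) + (\<Sum>k\<in>M. g k)"
    unfolding M_def by (metis finite_atMost sum.Int_Diff)
  also have "(\<Sum>k\<in>{..b} \<inter> {0, p ^ d}. g k) = (a choose b) + (if p ^ d \<le> b then a choose (b - p ^ d) else 0)"
  proof (cases "p ^ d \<le> b")
    case True
    then have "{..b} \<inter> {0, p ^ d} = {0, p ^ d}" by auto
    then show ?thesis using True \<open>p ^ d \<noteq> 0\<close> by (simp add: g_def)
  next
    case False
    then have "{..b} \<inter> {0, p ^ d} = {0}" by auto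
    then show ?thesis using False by (simp add: g_def)
  qed
  finally have sum_eq: "(a + p ^ d) choose b =
      (a choose b) + (if p ^ d \<le> b then a choose (b - p ^ d) else 0) + (\<Sum>k\<in>M. g k)" .
  have "p dvd (\<Sum>k\<in>M. g k)"
  proof (rule dvd_sum)
    fix k assume k: "k \<in> M"
    show "p dvd g k"
    proof (cases "k < p ^ d")
      case True
      then show ?thesis using k prime_dvd_choose_prime_power[OF assms, of k d] by (simp add: g_def M_def)
    next
      case False
      then show ?thesis using k by (simp add: g_def M_def binomial_eq_0)
    qed
  qed
  then show ?thesis unfolding sum_eq by (simp add: cong_add_lcancel_0_nat cong_0_iff)
qed

text \<open>Lucas' theorem in the case where all base-\<open>p\<close> digits of the upper index are \<open>0\<close> or \<open>1\<close>.\<close>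
lemma choose_Sum_powers_of_cong:
  assumes "prime p" "powers_of p U"
  shows "[\<Sum>U choose b = (if b \<in> subset_sums U then 1 else 0)] (mod p)"
proof -
  have p2: "2 \<le> p" using assms(1) by (simp add: prime_ge_2_nat)
  have "finite U" using assms(2) by (simp add: powers_of_def)
  then show ?thesis
    using assms(2)
  proof (induction U arbitrary: b rule: finite_linorder_max_induct)
    case empty
    then show ?case by (cases b) (auto simp: subset_sums_def)
  next
    case (insert m U)
    obtain e where m: "m = p ^ e" using insert.prems by (auto simp: powers_of_def)
    have U: "powers_of p U" using insert.prems by (simp add: powers_of_insert_iff)
    have "m \<notin> U" using insert.hyps(2) by blast
    have less: "\<Sum>U < m" using Sum_powers_of_less[OF p2 U] insert.hyps(2) m by blast
    have sums: "subset_sums (insert m U) = subset_sums U \<union> (+) m ` subset_sums U"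
      using subset_sums_insert[OF insert.hyps(1) \<open>m \<notin> U\<close>] .
    have small: "x < m" if "x \<in> subset_sums U" for x
      using subset_sums_le_Sum[OF insert.hyps(1) that] less by simp
    have sum_eq: "\<Sum>(insert m U) = \<Sum>U + m" using insert.hyps(1) \<open>m \<notin> U\<close> by simp
    have "[\<Sum>(insert m U) choose b = (\<Sum>U choose b) + (if m \<le> b then \<Sum>U choose (b - m) else 0)] (mod p)"
      unfolding sum_eq unfolding m by (rule choose_add_prime_power_cong[OF assms(1)])
    also have "(\<Sum>U choose b) + (if m \<le> b then \<Sum>U choose (b - m) else 0) =
        (if m \<le> b then \<Sum>U choose (b - m) else \<Sum>U choose b)"
      using less by (auto simp: binomial_eq_0)
    also have "[(if m \<le> b then \<Sum>U choose (b - m) else \<Sum>U choose b) =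
        (if m \<le> b then (if b - m \<in> subset_sums U then 1 else 0)
         else (if b \<in> subset_sums U then 1 else 0))] (mod p)"
      using insert.IH[OF U] by simp
    also have "(if m \<le> b then (if b - m \<in> subset_sums U then 1 else 0)
         else (if b \<in> subset_sums U then 1 else 0)) =
        (if b \<in> subset_sums (insert m U) then 1 else (0::nat))"
      unfolding sums using small by (auto simp: image_iff le_iff_add)
    finally show ?case .
  qed
qed

text \<open>Positions are counted as in \<^const>\<open>perm_descents\<close>: \<open>i\<close> is a descent when the \<open>i\<close>-th entry,
  counting from \<open>1\<close>, exceeds the next one.\<close>
definition list_descents :: "nat list \<Rightarrow> nat set" where
  "list_descents xs = {i \<in> {1..<length xs}. xs ! i < xs ! (i - 1)}"

definition lists_desc_within :: "nat set \<Rightarrow> nat set \<Rightarrow> nat list set" where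
  "lists_desc_within A S = {xs \<in> permutations_of_set A. list_descents xs \<subseteq> S}"

definition lists_desc_eq :: "nat set \<Rightarrow> nat set \<Rightarrow> nat list set" where
  "lists_desc_eq A D = {xs \<in> permutations_of_set A. list_descents xs = D}"

lemma list_descents_atMost_iff: "list_descents xs \<subseteq> {..s} \<longleftrightarrow> sorted (drop s xs)"
proof -
  have "list_descents xs \<subseteq> {..s} \<longleftrightarrow> (\<forall>j. Suc (s + j) < length xs \<longrightarrow> xs ! (s + j) \<le> xs ! Suc (s + j))"
  proof
    assume "list_descents xs \<subseteq> {..s}"
    then show "\<forall>j. Suc (s + j) < length xs \<longrightarrow> xs ! (s + j) \<le> xs ! Suc (s + j)"
      by (auto simp: list_descents_def subset_iff not_less)
  next
    assume asc: "\<forall>j. Suc (s + j) < length xs \<longrightarrow> xs ! (s + j) \<le> xs ! Suc (s + j)"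
    show "list_descents xs \<subseteq> {..s}"
    proof
      fix i assume i: "i \<in> list_descents xs"
      show "i \<in> {..s}"
      proof (rule ccontr)
        assume "i \<notin> {..s}"
        then obtain j where "i = Suc (s + j)" by (metis atMost_iff add_Suc_right less_imp_Suc_add not_le)
        then show False using i asc by (auto simp: list_descents_def)
      qed
    qed
  qed
  also have "\<dots> \<longleftrightarrow> sorted (drop s xs)"
    unfolding sorted_iff_nth_Suc by (auto simp: add.commute)
  finally show ?thesis .
qed

lemma list_descents_empty_iff: "list_descents xs = {} \<longleftrightarrow> sorted xs"
  using list_descents_atMost_iff[of xs 0] by (auto simp: list_descents_def)

lemma list_descents_take: "list_descents (take s xs) = list_descents xs \<inter> {..<s}"
  by (auto simp: list_descents_def)

lemma list_descents_append_sorted: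
  assumes "sorted ys"
  shows "list_descents (xs @ ys) \<subseteq> insert (length xs) (list_descents xs)"
proof -
  have "list_descents (xs @ ys) \<subseteq> {..length xs}"
    using assms list_descents_atMost_iff[of "xs @ ys" "length xs"] by simp
  moreover have "list_descents (xs @ ys) \<inter> {..<length xs} = list_descents xs"
    using list_descents_take[of "length xs" "xs @ ys"] by simp
  ultimately show ?thesis by (auto simp: subset_iff) (metis IntI lessThan_iff le_neq_implies_less)
qed

lemma lists_desc_within_empty:
  assumes "finite A"
  shows "lists_desc_within A {} = {sorted_list_of_set A}"
  using assms sorted_distinct_set_unique[of _ "sorted_list_of_set A"]
  by (auto simp: lists_desc_within_def permutations_of_set_def list_descents_empty_iff)

text \<open>A list whose descents lie in \<open>S\<close> is increasing after position \<open>Max S\<close>, so it is determined by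
  its first \<open>Max S\<close> entries, which form a list with descents in \<open>S - {Max S}\<close>.\<close>
lemma lists_desc_within_Max:
  assumes "finite A" "S \<subseteq> {1..<card A}" "S \<noteq> {}" "s = Max S"
  shows "lists_desc_within A S = (\<lambda>ys. ys @ sorted_list_of_set (A - set ys)) `
            (\<Union>Y\<in>{Y. Y \<subseteq> A \<and> card Y = s}. lists_desc_within Y (S - {s}))"
    (is "_ = ?extend ` ?Prefixes")
proof
  have "finite S" using assms(2) finite_subset by blast
  then have "s \<in> S" and S_le: "S \<subseteq> {..s}" using assms(3,4) by auto
  then have "s < card A" using assms(2) by auto
  show "lists_desc_within A S \<subseteq> ?extend ` ?Prefixes"
  proof
    fix xs assume "xs \<in> lists_desc_within A S"
    then have xs: "distinct xs" "set xs = A" "list_descents xs \<subseteq> S"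
      by (auto simp: lists_desc_within_def permutations_of_set_def)
    have "length xs = card A" using xs distinct_card by fastforce
    define ys where "ys = take s xs"
    have "sorted (drop s xs)" using list_descents_atMost_iff xs(3) S_le by blast
    moreover have "set (drop s xs) = A - set ys" "distinct (drop s xs)"
      using xs distinct_append[of "take s xs" "drop s xs"] set_append[of "take s xs" "drop s xs"]
      by (auto simp: ys_def)
    ultimately have "drop s xs = sorted_list_of_set (A - set ys)"
      using assms(1) by (metis finite_Diff sorted_distinct_set_unique sorted_list_of_set)
    then have "xs = ?extend ys" by (metis append_take_drop_id ys_def)
    moreover have "ys \<in> lists_desc_within (set ys) (S - {s})"
      using xs list_descents_take[of s xs] by (auto simp: ys_def lists_desc_within_def permutations_of_set_def)
    moreover have "set ys \<subseteq> A" "card (set ys) = s"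
      using xs \<open>length xs = card A\<close> \<open>s < card A\<close> set_take_subset[of s xs]
      by (auto simp: ys_def distinct_card)
    ultimately show "xs \<in> ?extend ` ?Prefixes" by blast
  qed
  show "?extend ` ?Prefixes \<subseteq> lists_desc_within A S"
  proof
    fix xs assume "xs \<in> ?extend ` ?Prefixes"
    then obtain ys Y where xs: "xs = ?extend ys" and Y: "Y \<subseteq> A" "card Y = s"
      and ys: "ys \<in> lists_desc_within Y (S - {s})" by blast
    from ys have ys': "distinct ys" "set ys = Y" "list_descents ys \<subseteq> S - {s}"
      by (auto simp: lists_desc_within_def permutations_of_set_def)
    have "length ys = s" using ys' Y(2) distinct_card by fastforce
    have "list_descents xs \<subseteq> insert (length ys) (list_descents ys)"
      unfolding xs by (rule list_descents_append_sorted) simp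
    then have "list_descents xs \<subseteq> S" using ys'(3) \<open>length ys = s\<close> \<open>s \<in> S\<close> by blast
    moreover have "distinct xs" "set xs = A"
      using ys'(1,2) Y(1) assms(1) by (auto simp: xs)
    ultimately show "xs \<in> lists_desc_within A S"
      by (simp add: lists_desc_within_def permutations_of_set_def)
  qed
qed

lemma card_lists_desc_within_Max_sum:
  assumes "finite A" "S \<subseteq> {1..<card A}" "S \<noteq> {}" "s = Max S"
  shows "card (lists_desc_within A S) = (\<Sum>Y | Y \<subseteq> A \<and> card Y = s. card (lists_desc_within Y (S - {s})))"
proof -
  let ?extend = "\<lambda>ys. ys @ sorted_list_of_set (A - set ys)"
  let ?Prefixes = "\<Union>Y\<in>{Y. Y \<subseteq> A \<and> card Y = s}. lists_desc_within Y (S - {s})"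
  have len: "length ys = s" if "ys \<in> ?Prefixes" for ys
    using that length_finite_permutations_of_set by (auto simp: lists_desc_within_def)
  have "inj_on ?extend ?Prefixes"
  proof (rule inj_onI)
    fix xs ys assume "xs \<in> ?Prefixes" "ys \<in> ?Prefixes" "?extend xs = ?extend ys"
    then show "xs = ys" using len[of xs] len[of ys] by (simp add: append_eq_append_conv)
  qed
  then have "card (lists_desc_within A S) = card ?Prefixes"
    unfolding lists_desc_within_Max[OF assms] by (rule card_image)
  also have "\<dots> = (\<Sum>Y | Y \<subseteq> A \<and> card Y = s. card (lists_desc_within Y (S - {s})))"
  proof (rule card_UN_disjoint)
    show "finite {Y. Y \<subseteq> A \<and> card Y = s}" using assms(1) by simp
    show "\<forall>Y\<in>{Y. Y \<subseteq> A \<and> card Y = s}. finite (lists_desc_within Y (S - {s}))"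
      by (simp add: lists_desc_within_def)
    show "\<forall>Y\<in>{Y. Y \<subseteq> A \<and> card Y = s}. \<forall>Z\<in>{Y. Y \<subseteq> A \<and> card Y = s}. Y \<noteq> Z \<longrightarrow>
        lists_desc_within Y (S - {s}) \<inter> lists_desc_within Z (S - {s}) = {}"
      by (auto simp: lists_desc_within_def permutations_of_set_def)
  qed
  finally show ?thesis .
qed

text \<open>This is the multinomial coefficient of the gaps of \<open>S\<close>, peeled off one binomial factor at a
  time; the induction needs that it depends only on \<open>card A\<close>.\<close>
lemma card_lists_desc_within_Max:
  assumes "finite A" "S \<subseteq> {1..<card A}" "S \<noteq> {}" "s = Max S" "finite B" "card B = s"
  shows "card (lists_desc_within A S) = (card A choose s) * card (lists_desc_within B (S - {s}))"
  using assms
proof (induction "card A" arbitrary: A B S s rule: less_induct)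
  case less
  have "finite S" using less.prems(2) finite_subset by blast
  then have S': "S - {s} \<subseteq> {1..<s}" and "s < card A"
    using less.prems(2-4) by (auto simp: le_neq_implies_less)
  have same: "card (lists_desc_within Y (S - {s})) = card (lists_desc_within B (S - {s}))"
    if "finite Y" "card Y = s" for Y
  proof (cases "S - {s} = {}")
    case True
    then show ?thesis using that less.prems(5) unfolding True by (simp add: lists_desc_within_empty)
  next
    case False
    define t where "t = Max (S - {s})"
    have "card (lists_desc_within C (S - {s})) = (s choose t) * card (lists_desc_within {0..<t} (S - {s} - {t}))"
      if "finite C" "card C = s" for C
      using that by (subst less.hyps) (use S' False \<open>s < card A\<close> t_def in auto)
    then show ?thesis using that less.prems(5,6) by simp
  qed
  have "card (lists_desc_within A S) = (\<Sum>Y | Y \<subseteq> A \<and> card Y = s. card (lists_desc_within Y (S - {s})))"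
    using card_lists_desc_within_Max_sum less.prems(1-4) by blast
  also have "\<dots> = (\<Sum>Y | Y \<subseteq> A \<and> card Y = s. card (lists_desc_within B (S - {s})))"
    using same less.prems(1) by (intro sum.cong) (auto intro: finite_subset)
  also have "\<dots> = (card A choose s) * card (lists_desc_within B (S - {s}))"
    using n_subsets[OF less.prems(1)] by simp
  finally show ?case .
qed

definition subset_sum_chain :: "nat set \<Rightarrow> nat set \<Rightarrow> bool" where
  "subset_sum_chain U S \<longleftrightarrow> S \<subseteq> subset_sums U \<and>
     (\<forall>V W. V \<subseteq> U \<longrightarrow> W \<subseteq> U \<longrightarrow> \<Sum>V \<in> S \<longrightarrow> \<Sum>W \<in> S \<longrightarrow> V \<subseteq> W \<or> W \<subseteq> V)"

lemma subset_sum_chain_Max: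
  assumes "2 \<le> p" "powers_of p U" "V0 \<subseteq> U" "s = \<Sum>V0" "s \<in> S" "\<forall>x\<in>S. x \<le> s"
  shows "subset_sum_chain U S \<longleftrightarrow> subset_sum_chain V0 (S - {s})"
proof
  have inj: "V = W" if "V \<subseteq> U" "W \<subseteq> U" "\<Sum>V = \<Sum>W" for V W
    using that Sum_powers_of_eq_iff[OF assms(1)] powers_of_subset[OF assms(2)] by blast
  have "finite U" using assms(2) by (simp add: powers_of_def)
  then have mono: "\<Sum>V \<le> \<Sum>W" if "V \<subseteq> W" "W \<subseteq> U" for V W
    using that by (intro sum_mono2) (auto intro: finite_subset)
  show "subset_sum_chain V0 (S - {s})" if chain: "subset_sum_chain U S"
    unfolding subset_sum_chain_def
  proof (intro conjI allI impI)
    show "S - {s} \<subseteq> subset_sums V0"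
    proof
      fix x assume x: "x \<in> S - {s}"
      then obtain V where V: "V \<subseteq> U" "x = \<Sum>V"
        using chain by (auto simp: subset_sum_chain_def subset_sums_def)
      have "V \<subseteq> V0 \<or> V0 \<subseteq> V"
        using chain V x assms(3-5) unfolding subset_sum_chain_def by blast
      moreover have "\<not> V0 \<subseteq> V" using mono[of V0 V] V x assms(4,6) by fastforce
      ultimately have "V \<subseteq> V0" by blast
      then show "x \<in> subset_sums V0" using V(2) by (auto simp: subset_sums_def)
    qed
    fix V W assume "V \<subseteq> V0" "W \<subseteq> V0" "\<Sum>V \<in> S - {s}" "\<Sum>W \<in> S - {s}"
    then show "V \<subseteq> W \<or> W \<subseteq> V" using chain assms(3) by (auto simp: subset_sum_chain_def)
  qed
  assume chain: "subset_sum_chain V0 (S - {s})"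
  have below: "V \<subseteq> V0" if "V \<subseteq> U" "\<Sum>V \<in> S" for V
  proof (cases "\<Sum>V = s")
    case True
    then show ?thesis using inj[of V V0] that assms(3,4) by simp
  next
    case False
    then have "\<Sum>V \<in> subset_sums V0" using chain that(2) by (auto simp: subset_sum_chain_def)
    then obtain V' where "V' \<subseteq> V0" "\<Sum>V = \<Sum>V'" by (auto simp: subset_sums_def)
    then show ?thesis using inj[of V V'] that assms(3) by auto
  qed
  show "subset_sum_chain U S"
    unfolding subset_sum_chain_def
  proof (intro conjI allI impI)
    have "subset_sums V0 \<subseteq> subset_sums U" using assms(3) by (auto simp: subset_sums_def)
    then show "S \<subseteq> subset_sums U"
      using chain assms(3,4) by (auto simp: subset_sum_chain_def subset_sums_def)
    fix V W assume VW: "V \<subseteq> U" "W \<subseteq> U" "\<Sum>V \<in> S" "\<Sum>W \<in> S"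
    consider "\<Sum>V = s" | "\<Sum>W = s" | "\<Sum>V \<noteq> s" "\<Sum>W \<noteq> s" by blast
    then show "V \<subseteq> W \<or> W \<subseteq> V"
    proof cases
      case 1
      then show ?thesis using inj[of V V0] below[of W] VW assms(3,4) by auto
    next
      case 2
      then show ?thesis using inj[of W V0] below[of V] VW assms(3,4) by auto
    next
      case 3
      then show ?thesis using chain below VW by (auto simp: subset_sum_chain_def)
    qed
  qed
qed

text \<open>Peeling off \<open>s = Max S\<close> contributes the factor \<open>card A choose s\<close>, which modulo \<open>p\<close> is \<open>1\<close>
  if \<open>s\<close> is the sum of some \<open>V0 \<subseteq> U\<close> and \<open>0\<close> otherwise; the remaining sums must form a chain
  below \<open>V0\<close>.\<close>
lemma card_lists_desc_within_cong:
  assumes "prime p" "powers_of p U" "finite A" "card A = \<Sum>U" "S \<subseteq> {1..<card A}"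
  shows "[card (lists_desc_within A S) = (if subset_sum_chain U S then 1 else 0)] (mod p)"
  using assms(2-)
proof (induction "card A" arbitrary: A S U rule: less_induct)
  case less
  show ?case
  proof (cases "S = {}")
    case True
    then show ?thesis using less.prems by (simp add: lists_desc_within_empty subset_sum_chain_def)
  next
    case False
    define s where "s = Max S"
    have "finite S" using less.prems(4) finite_subset by blast
    then have "s \<in> S" and S_le: "\<forall>x\<in>S. x \<le> s" and S': "S - {s} \<subseteq> {1..<s}"
      using False less.prems(4) by (auto simp: s_def le_neq_implies_less)
    have "s < card A" using \<open>s \<in> S\<close> less.prems(4) by auto
    have card_eq: "card (lists_desc_within A S) = (card A choose s) * card (lists_desc_within {0..<s} (S - {s}))"
      using card_lists_desc_within_Max[OF less.prems(2,4) False s_def] by simp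
    have binomial: "[card A choose s = (if s \<in> subset_sums U then 1 else 0)] (mod p)"
      using choose_Sum_powers_of_cong[OF assms(1) less.prems(1)] less.prems(3) by simp
    show ?thesis
    proof (cases "s \<in> subset_sums U")
      case True
      then obtain V0 where V0: "V0 \<subseteq> U" "s = \<Sum>V0" by (auto simp: subset_sums_def)
      have "[card (lists_desc_within {0..<s} (S - {s})) = (if subset_sum_chain V0 (S - {s}) then 1 else 0)] (mod p)"
        using less.hyps[of "{0..<s}" V0 "S - {s}"] \<open>s < card A\<close> S' V0 powers_of_subset[OF less.prems(1)]
        by simp
      then have "[card (lists_desc_within A S) = (if subset_sum_chain V0 (S - {s}) then 1 else 0)] (mod p)"
        unfolding card_eq using cong_mult[OF binomial] True by fastforce
      then show ?thesis
        using subset_sum_chain_Max[OF _ less.prems(1) V0 \<open>s \<in> S\<close> S_le] assms(1)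
        by (simp add: prime_ge_2_nat)
    next
      case False
      have "[card (lists_desc_within A S) = 0] (mod p)"
        unfolding card_eq using cong_mult[OF binomial cong_refl] False by simp
      moreover have "\<not> subset_sum_chain U S" using False \<open>s \<in> S\<close> by (auto simp: subset_sum_chain_def)
      ultimately show ?thesis by simp
    qed
  qed
qed

lemma card_lists_desc_eq_inclusion_exclusion:
  assumes "finite D"
  shows "int (card (lists_desc_eq A D)) =
    (\<Sum>T\<in>Pow D. (-1) ^ (card D - card T) * int (card (lists_desc_within A T)))"
proof (rule inclusion_exclusion_mobius[OF _ assms])
  fix S :: "nat set" assume "finite S"
  have "lists_desc_within A S = (\<Union>T\<in>Pow S. lists_desc_eq A T)"
    by (auto simp: lists_desc_within_def lists_desc_eq_def)
  also have "card \<dots> = (\<Sum>T\<in>Pow S. card (lists_desc_eq A T))"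
    by (rule card_UN_disjoint) (use \<open>finite S\<close> in \<open>auto simp: lists_desc_eq_def\<close>)
  finally have "card (lists_desc_within A S) = (\<Sum>T\<in>Pow S. card (lists_desc_eq A T))" .
  then show "int (card (lists_desc_within A S)) = (\<Sum>T\<in>Pow S. int (card (lists_desc_eq A T)))"
    by simp
qed

lemma Pset_eq_subset_sums:
  assumes "0 < p" "powers_of p Q"
  shows "Pset Q = subset_sums Q \<inter> {1..<\<Sum>Q}"
proof -
  have "finite Q" and pos: "\<And>x. x \<in> Q \<Longrightarrow> 0 < x"
    using assms powers_of_pos by (auto simp: powers_of_def)
  have proper_iff: "U \<noteq> {} \<and> U \<subset> Q \<longleftrightarrow> \<Sum>U \<in> {1..<\<Sum>Q}" if "U \<subseteq> Q" for U
  proof -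
    have "finite U" using that \<open>finite Q\<close> finite_subset by blast
    have "U \<noteq> {} \<longleftrightarrow> 0 < \<Sum>U"
    proof
      show "U \<noteq> {} \<Longrightarrow> 0 < \<Sum>U" using \<open>finite U\<close> pos that by (intro sum_pos) auto
    qed auto
    moreover have "U \<noteq> Q \<longleftrightarrow> 0 < \<Sum>(Q - U)"
    proof
      show "U \<noteq> Q \<Longrightarrow> 0 < \<Sum>(Q - U)" using \<open>finite Q\<close> pos that by (intro sum_pos) auto
    qed auto
    moreover have "\<Sum>Q = \<Sum>U + \<Sum>(Q - U)"
      using that \<open>finite Q\<close> by (simp add: sum.subset_diff)
    ultimately show ?thesis using that by auto
  qed
  show ?thesis
  proof (intro set_eqI iffI)
    fix x assume "x \<in> Pset Q"
    then obtain U where "U \<noteq> {}" "U \<subset> Q" "x = \<Sum>U" unfolding Pset_def by blast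
    then show "x \<in> subset_sums Q \<inter> {1..<\<Sum>Q}"
      using proper_iff[of U] by (auto simp: subset_sums_def)
  next
    fix x assume "x \<in> subset_sums Q \<inter> {1..<\<Sum>Q}"
    then obtain U where "U \<subseteq> Q" "x = \<Sum>U" "x \<in> {1..<\<Sum>Q}" by (auto simp: subset_sums_def)
    then show "x \<in> Pset Q" using proper_iff[of U] unfolding Pset_def by blast
  qed
qed

lemma Ple_Sum_iff:
  assumes "2 \<le> p" "powers_of p Q" "V \<subseteq> Q" "W \<subseteq> Q"
  shows "Ple Q (\<Sum>V) (\<Sum>W) \<longleftrightarrow> V \<noteq> {} \<and> V \<subset> Q \<and> W \<noteq> {} \<and> W \<subset> Q \<and> V \<subseteq> W"
proof -
  have inj: "U = U'" if "U \<subseteq> Q" "U' \<subseteq> Q" "\<Sum>U = \<Sum>U'" for U U'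
    using that Sum_powers_of_eq_iff[OF assms(1)] powers_of_subset[OF assms(2)] by blast
  show ?thesis
  proof
    assume "Ple Q (\<Sum>V) (\<Sum>W)"
    then obtain V' W' where "V' \<noteq> {}" "V' \<subset> Q" "W' \<noteq> {}" "W' \<subset> Q" "V' \<subseteq> W'"
      "\<Sum>V = \<Sum>V'" "\<Sum>W = \<Sum>W'" unfolding Ple_def by blast
    moreover have "V = V'" "W = W'" using inj calculation assms(3,4) by auto
    ultimately show "V \<noteq> {} \<and> V \<subset> Q \<and> W \<noteq> {} \<and> W \<subset> Q \<and> V \<subseteq> W" by simp
  qed (auto simp: Ple_def)
qed

lemma is_chain_in_Pset_iff:
  assumes "2 \<le> p" "powers_of p Q" "D \<subseteq> {1..<\<Sum>Q}"
  shows "is_chain_in Q (D \<inter> Pset Q) C \<longleftrightarrow> C \<subseteq> D \<and> subset_sum_chain Q C"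
proof -
  have P: "Pset Q = subset_sums Q \<inter> {1..<\<Sum>Q}" using assms(1,2) by (intro Pset_eq_subset_sums) auto
  have proper: "V \<noteq> {} \<and> V \<subset> Q" if V: "V \<subseteq> Q" "\<Sum>V \<in> Pset Q" for V
  proof -
    obtain U where "U \<noteq> {}" "U \<subset> Q" "\<Sum>V = \<Sum>U" using V(2) unfolding Pset_def by blast
    moreover have "V = U"
      using calculation V(1) Sum_powers_of_eq_iff[OF assms(1)] powers_of_subset[OF assms(2)] by blast
    ultimately show ?thesis by simp
  qed
  show ?thesis
  proof
    assume "is_chain_in Q (D \<inter> Pset Q) C"
    then have C: "C \<subseteq> D \<inter> Pset Q" and comparable: "\<forall>x\<in>C. \<forall>y\<in>C. Ple Q x y \<or> Ple Q y x"
      by (auto simp: is_chain_in_def)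
    have "V \<subseteq> W \<or> W \<subseteq> V" if "V \<subseteq> Q" "W \<subseteq> Q" "\<Sum>V \<in> C" "\<Sum>W \<in> C" for V W
    proof -
      have "Ple Q (\<Sum>V) (\<Sum>W) \<or> Ple Q (\<Sum>W) (\<Sum>V)" using comparable that(3,4) by blast
      then show ?thesis using Ple_Sum_iff[OF assms(1,2)] that(1,2) by blast
    qed
    then show "C \<subseteq> D \<and> subset_sum_chain Q C" using C P by (auto simp: subset_sum_chain_def)
  next
    assume C: "C \<subseteq> D \<and> subset_sum_chain Q C"
    then have "C \<subseteq> Pset Q" using assms(3) P by (auto simp: subset_sum_chain_def)
    moreover have "Ple Q x y \<or> Ple Q y x" if "x \<in> C" "y \<in> C" for x y
    proof -
      have "x \<in> Sum ` Pow Q" "y \<in> Sum ` Pow Q"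
        using C that by (auto simp: subset_sum_chain_def subset_sums_def)
      then obtain V W where VW: "V \<subseteq> Q" "W \<subseteq> Q" "x = \<Sum>V" "y = \<Sum>W" by blast
      then have "V \<subseteq> W \<or> W \<subseteq> V" using C that unfolding subset_sum_chain_def by blast
      moreover have "V \<noteq> {} \<and> V \<subset> Q" "W \<noteq> {} \<and> W \<subset> Q"
        using proper VW that \<open>C \<subseteq> Pset Q\<close> by auto
      ultimately show ?thesis using Ple_Sum_iff[OF assms(1,2) VW(1,2)] Ple_Sum_iff[OF assms(1,2) VW(2,1)] VW(3,4)
        by blast
    qed
    ultimately show "is_chain_in Q (D \<inter> Pset Q) C" using C by (auto simp: is_chain_in_def)
  qed
qed

lemma card_lists_desc_eq_cong:
  assumes "prime p" "powers_of p Q" "n = \<Sum>Q" "D \<subseteq> {1..<n}"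
  shows "[int (card (lists_desc_eq {1..n} D)) = (-1) ^ card D * chi Q (D \<inter> Pset Q)] (mod int p)"
proof -
  have "2 \<le> p" using assms(1) by (simp add: prime_ge_2_nat)
  have "finite D" using assms(4) finite_subset by blast
  let ?chain = "\<lambda>T. subset_sum_chain Q T"
  have chains: "{C. is_chain_in Q (D \<inter> Pset Q) C} = {T \<in> Pow D. ?chain T}"
    using is_chain_in_Pset_iff[OF \<open>2 \<le> p\<close> assms(2) assms(4)[unfolded assms(3)]] by auto
  have "int (card (lists_desc_eq {1..n} D)) =
      (\<Sum>T\<in>Pow D. (-1) ^ (card D - card T) * int (card (lists_desc_within {1..n} T)))"
    using card_lists_desc_eq_inclusion_exclusion[OF \<open>finite D\<close>] .
  also have "[\<dots> = (\<Sum>T\<in>Pow D. (-1) ^ (card D - card T) * (if ?chain T then 1 else 0))] (mod int p)"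
  proof (intro cong_sum cong_scalar_left)
    fix T assume "T \<in> Pow D"
    then have "[card (lists_desc_within {1..n} T) = (if ?chain T then 1 else 0)] (mod p)"
      by (intro card_lists_desc_within_cong[OF assms(1,2)]) (use assms(3,4) in auto)
    then have "[int (card (lists_desc_within {1..n} T)) = int (if ?chain T then 1 else 0)] (mod int p)"
      using cong_int_iff by blast
    then show "[int (card (lists_desc_within {1..n} T)) = (if ?chain T then 1 else 0)] (mod int p)"
      by (cases "?chain T") simp_all
  qed
  also have "(\<Sum>T\<in>Pow D. (-1) ^ (card D - card T) * (if ?chain T then 1 else 0)) =
      (\<Sum>T\<in>{T \<in> Pow D. ?chain T}. (-1::int) ^ (card D - card T))"
    using \<open>finite D\<close> by (simp add: sum.inter_filter[symmetric] if_distrib cong: if_cong)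
  also have "\<dots> = (\<Sum>T\<in>{T \<in> Pow D. ?chain T}. (-1) ^ card D * (-1) ^ card T)"
  proof (rule sum.cong[OF refl])
    fix T assume "T \<in> {T \<in> Pow D. ?chain T}"
    then have "card T \<le> card D" using \<open>finite D\<close> by (simp add: card_mono)
    then show "(-1::int) ^ (card D - card T) = (-1) ^ card D * (-1) ^ card T"
      by (simp add: neg_one_power_add_eq_neg_one_power_diff[symmetric] power_add)
  qed
  also have "\<dots> = (-1) ^ card D * chi Q (D \<inter> Pset Q)"
    unfolding chi_def chains by (simp add: sum_distrib_left)
  finally show ?thesis .
qed

lemma perm_descents_eq_list_descents: "perm_descents n w = list_descents (map w [1..<Suc n])"
  by (auto simp: perm_descents_def list_descents_def nth_map_upt simp del: upt_Suc)

lemma bij_betw_permutes_permutations_of_set: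
  assumes "distinct xs"
  shows "bij_betw (\<lambda>w. map w xs) {w. w permutes set xs} (permutations_of_set (set xs))"
proof -
  let ?f = "\<lambda>w. map w xs"
  have inj: "inj_on ?f {w. w permutes set xs}"
  proof (rule inj_onI)
    fix w v assume w: "w \<in> {w. w permutes set xs}" and v: "v \<in> {w. w permutes set xs}"
      and "?f w = ?f v"
    then have "\<forall>x\<in>set xs. w x = v x" by (simp add: map_eq_conv)
    moreover have "\<forall>x. x \<notin> set xs \<longrightarrow> w x = v x" using w v by (simp add: permutes_not_in)
    ultimately show "w = v" by blast
  qed
  have sub: "?f ` {w. w permutes set xs} \<subseteq> permutations_of_set (set xs)"
  proof
    fix ys assume "ys \<in> ?f ` {w. w permutes set xs}"
    then obtain w where "w permutes set xs" "ys = map w xs" by blast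
    then show "ys \<in> permutations_of_set (set xs)"
      using assms permutes_inj_on[of w "set xs"] permutes_image[of w "set xs"]
      by (simp add: permutations_of_set_def distinct_map)
  qed
  have "card (?f ` {w. w permutes set xs}) = card (permutations_of_set (set xs))"
    using card_image[OF inj] card_permutations[OF refl finite_set] by simp
  then show ?thesis
    using card_subset_eq[OF finite_permutations_of_set sub] inj by (simp add: bij_betw_def)
qed

lemma card_perm_descents_eq:
  "card {w. w permutes {1..n} \<and> perm_descents n w = D} = card (lists_desc_eq {1..n} D)"
proof -
  have "bij_betw (\<lambda>w. map w [1..<Suc n]) {w. w permutes {1..n}} (permutations_of_set {1..n})"
    using bij_betw_permutes_permutations_of_set[of "[1..<Suc n]"]
    by (simp add: atLeastLessThanSuc_atLeastAtMost del: upt_Suc)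
  then have "bij_betw (\<lambda>w. map w [1..<Suc n]) {w \<in> {w. w permutes {1..n}}. perm_descents n w = D}
      (lists_desc_eq {1..n} D)"
    unfolding lists_desc_eq_def
    by (rule bij_betw_Collect) (simp add: perm_descents_eq_list_descents del: upt_Suc)
  then show ?thesis by (simp add: bij_betw_same_card)
qed

lemma compositions_Cons_iff:
  "a # \<beta> \<in> compositions n \<longleftrightarrow> 0 < a \<and> a \<le> n \<and> \<beta> \<in> compositions (n - a)"
  unfolding compositions_def by auto

lemma compositions_0: "compositions 0 = {[]}"
proof -
  have "\<alpha> = []" if "\<forall>a\<in>set \<alpha>. 0 < a" "sum_list \<alpha> = 0" for \<alpha> :: "nat list"
    using that by (cases \<alpha>) auto
  then show ?thesis by (auto simp: compositions_def)
qed

lemma Nil_in_compositions_iff: "[] \<in> compositions n \<longleftrightarrow> n = 0"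
  unfolding compositions_def by auto

lemma comp_descents_eq_image: "comp_descents \<alpha> = (\<lambda>j. sum_list (take j \<alpha>)) ` {1..<length \<alpha>}"
  by (auto simp: comp_descents_def)

lemma comp_descents_Cons:
  "comp_descents (a # \<beta>) = (if \<beta> = [] then {} else insert a ((+) a ` comp_descents \<beta>))"
proof (cases "\<beta> = []")
  case False
  then have "{1..<length (a # \<beta>)} = insert 1 (Suc ` {1..<length \<beta>})"
    by (auto simp: image_Suc_atLeastLessThan)
  then show ?thesis
    using False unfolding comp_descents_eq_image[of "a # \<beta>"] comp_descents_eq_image[of \<beta>]
    by (simp only: image_insert image_image) simp
qed (simp add: comp_descents_def)

lemma comp_descents_subset:
  "\<alpha> \<in> compositions n \<Longrightarrow> comp_descents \<alpha> \<subseteq> {1..<n}"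
proof (induction \<alpha> arbitrary: n)
  case (Cons a \<beta>)
  then have "0 < a" and \<beta>: "\<beta> \<in> compositions (n - a)" by (auto simp: compositions_Cons_iff)
  show ?case
  proof (cases "\<beta> = []")
    case False
    then have "a < n" using \<beta> \<open>0 < a\<close> Cons.prems compositions_0
      by (fastforce simp: compositions_Cons_iff)
    moreover have "\<forall>x\<in>comp_descents \<beta>. 1 \<le> x \<and> x < n - a" using Cons.IH[OF \<beta>] by auto
    ultimately show ?thesis using \<open>0 < a\<close> False by (auto simp: comp_descents_Cons)
  qed (simp add: comp_descents_Cons)
qed (simp add: comp_descents_def)

lemma inj_on_comp_descents: "inj_on comp_descents (compositions n)"
proof (rule inj_onI)
  fix \<alpha> \<beta> assume "\<alpha> \<in> compositions n" "\<beta> \<in> compositions n" "comp_descents \<alpha> = comp_descents \<beta>"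
  then show "\<alpha> = \<beta>"
  proof (induction \<alpha> arbitrary: n \<beta>)
    case Nil
    then show ?case using compositions_0 by (simp add: Nil_in_compositions_iff)
  next
    case (Cons a \<alpha>')
    from Cons.prems(1) have "0 < a" and \<alpha>': "\<alpha>' \<in> compositions (n - a)"
      by (auto simp: compositions_Cons_iff)
    obtain b \<beta>' where \<beta>: "\<beta> = b # \<beta>'"
      using Cons.prems(1,2) \<open>0 < a\<close> by (cases \<beta>) (auto simp: Nil_in_compositions_iff compositions_Cons_iff)
    from Cons.prems(2) have "0 < b" and \<beta>': "\<beta>' \<in> compositions (n - b)"
      by (auto simp: \<beta> compositions_Cons_iff)
    have above: "\<forall>x \<in> comp_descents \<gamma>. 0 < x" if "\<gamma> \<in> compositions m" for \<gamma> m
      using comp_descents_subset[OF that] by auto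
    show ?case
    proof (cases "\<alpha>' = []")
      case True
      then have "\<beta>' = []" using Cons.prems(3) by (simp add: \<beta> comp_descents_Cons split: if_splits)
      then show ?thesis
        using True \<alpha>' \<beta>' Cons.prems(1,2) by (simp add: \<beta> Nil_in_compositions_iff compositions_Cons_iff)
    next
      case False
      then have "\<beta>' \<noteq> []" using Cons.prems(3) by (auto simp: \<beta> comp_descents_Cons)
      then have eq: "insert a ((+) a ` comp_descents \<alpha>') = insert b ((+) b ` comp_descents \<beta>')"
        using Cons.prems(3) False by (simp add: \<beta> comp_descents_Cons)
      have "a = b" \<comment> \<open>both are the least descent\<close>
        using eq above[OF \<alpha>'] above[OF \<beta>'] by (metis (no_types, lifting) image_iff insert_iff
            less_add_same_cancel1 linorder_neq_iff not_add_less1)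
      moreover have "a \<notin> (+) a ` comp_descents \<gamma>" if "\<gamma> \<in> compositions m" for \<gamma> m
        using above[OF that] by auto
      ultimately have "(+) a ` comp_descents \<alpha>' = (+) a ` comp_descents \<beta>'"
        using eq insert_ident \<alpha>' \<beta>' by metis
      then have "comp_descents \<alpha>' = comp_descents \<beta>'"
        using inj_image_eq_iff[of "(+) a"] by (simp add: inj_def)
      then show ?thesis using Cons.IH[OF \<alpha>'] \<beta>' \<open>a = b\<close> \<beta> by simp
    qed
  qed
qed

lemma comp_descents_surj:
  assumes "0 < n" "D \<subseteq> {1..<n}"
  shows "\<exists>\<alpha>\<in>compositions n. comp_descents \<alpha> = D"
  using assms
proof (induction n arbitrary: D rule: less_induct)
  case (less n)
  show ?case
  proof (cases "D = {}")
    case True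
    have "[n] \<in> compositions n" using less.prems by (simp add: compositions_def)
    then show ?thesis using True by (intro bexI[of _ "[n]"]) (simp_all add: comp_descents_Cons)
  next
    case False
    define a where "a = Min D"
    have "finite D" using less.prems(2) finite_subset by blast
    then have "a \<in> D" and a_le: "\<forall>x\<in>D. a \<le> x" using False by (auto simp: a_def)
    then have "0 < a" "a < n" using less.prems(2) by auto
    define D' where "D' = (\<lambda>x. x - a) ` (D - {a})"
    have "D' \<subseteq> {1..<n - a}" using a_le less.prems(2) by (force simp: D'_def)
    then obtain \<beta> where \<beta>: "\<beta> \<in> compositions (n - a)" "comp_descents \<beta> = D'"
      using less.IH[of "n - a" D'] \<open>0 < a\<close> \<open>a < n\<close> by auto
    have "\<beta> \<noteq> []" using \<beta>(1) \<open>a < n\<close> by (auto simp: Nil_in_compositions_iff)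
    have "(+) a ` D' = D - {a}"
      using a_le by (force simp: D'_def image_image intro: image_eqI)
    then have "comp_descents (a # \<beta>) = D"
      using \<beta>(2) \<open>\<beta> \<noteq> []\<close> \<open>a \<in> D\<close> by (auto simp: comp_descents_Cons)
    moreover have "a # \<beta> \<in> compositions n" using \<beta>(1) \<open>0 < a\<close> \<open>a < n\<close> by (simp add: compositions_Cons_iff)
    ultimately show ?thesis by blast
  qed
qed

lemma bij_betw_comp_descents:
  assumes "0 < n"
  shows "bij_betw comp_descents (compositions n) (Pow {1..<n})"
  unfolding bij_betw_def
  using inj_on_comp_descents comp_descents_subset comp_descents_surj[OF assms] by blast

lemma c_count_eq_card_descent_sets:
  assumes "0 < n"
  shows "c_count p i n = card {D. D \<subseteq> {1..<n} \<and> [card (lists_desc_eq {1..n} D) = i] (mod p)}"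
proof -
  have "ribbon \<alpha> = card (lists_desc_eq {1..n} (comp_descents \<alpha>))" if "\<alpha> \<in> compositions n" for \<alpha>
    using that card_perm_descents_eq by (simp add: ribbon_def compositions_def)
  then have "bij_betw comp_descents {\<alpha> \<in> compositions n. [ribbon \<alpha> = i] (mod p)}
      {D \<in> Pow {1..<n}. [card (lists_desc_eq {1..n} D) = i] (mod p)}"
    by (intro bij_betw_Collect[OF bij_betw_comp_descents[OF assms]]) simp
  then show ?thesis unfolding c_count_def by (simp add: bij_betw_same_card)
qed

lemma card_subsets_Un_disjoint:
  assumes "finite P" "finite F" "P \<inter> F = {}"
  shows "card {D. D \<subseteq> P \<union> F \<and> \<Psi> D} = (\<Sum>T\<in>Pow P. card {R. R \<subseteq> F \<and> \<Psi> (T \<union> R)})"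
proof -
  let ?Pairs = "SIGMA T:Pow P. {R. R \<subseteq> F \<and> \<Psi> (T \<union> R)}"
  let ?union = "\<lambda>(T, R). T \<union> R"
  have "inj_on ?union ?Pairs"
  proof (rule inj_onI)
    fix x y assume "x \<in> ?Pairs" "y \<in> ?Pairs" "?union x = ?union y"
    moreover obtain T R T' R' where "x = (T, R)" "y = (T', R')" by fastforce
    ultimately have "T \<subseteq> P" "R \<subseteq> F" "T' \<subseteq> P" "R' \<subseteq> F" "T \<union> R = T' \<union> R'" by auto
    then have "T = T'" "R = R'" using assms(3) by blast+
    then show "x = y" using \<open>x = (T, R)\<close> \<open>y = (T', R')\<close> by simp
  qed
  moreover have "?union ` ?Pairs = {D. D \<subseteq> P \<union> F \<and> \<Psi> D}"
  proof (intro equalityI subsetI)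
    fix D assume D: "D \<in> {D. D \<subseteq> P \<union> F \<and> \<Psi> D}"
    then have eq: "(D \<inter> P) \<union> (D \<inter> F) = D" by auto
    then have "(D \<inter> P, D \<inter> F) \<in> ?Pairs" using D by auto
    then have "?union (D \<inter> P, D \<inter> F) \<in> ?union ` ?Pairs" by (rule imageI)
    then show "D \<in> ?union ` ?Pairs" using eq by simp
  qed auto
  ultimately have "card {D. D \<subseteq> P \<union> F \<and> \<Psi> D} = card ?Pairs" using card_image by fastforce
  also have "\<dots> = (\<Sum>T\<in>Pow P. card {R. R \<subseteq> F \<and> \<Psi> (T \<union> R)})"
    using assms(1,2) by (intro card_SigmaI) auto
  finally show ?thesis .
qed

lemma card_subsets_even_eq:
  assumes "finite F" "F \<noteq> {}"
  shows "card {R. R \<subseteq> F \<and> even (card R) = b} = 2 ^ (card F - 1)"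
proof -
  let ?even = "{R. R \<subseteq> F \<and> even (card R)}" and ?odd = "{R. R \<subseteq> F \<and> odd (card R)}"
  have "card ?even = card ?odd"
    using card_subsupersets_even_odd[OF assms(1), of "{}"] assms(2) by auto
  moreover have "card ?even + card ?odd = 2 ^ card F"
  proof -
    have "Pow F = ?even \<union> ?odd" by auto
    then have "2 ^ card F = card (?even \<union> ?odd)" using card_Pow[OF assms(1)] by simp
    also have "\<dots> = card ?even + card ?odd" using assms(1) by (intro card_Un_disjoint) auto
    finally show ?thesis by simp
  qed
  moreover have "(2::nat) ^ card F = 2 * 2 ^ (card F - 1)"
    using assms by (simp add: card_gt_0_iff flip: power_Suc)
  ultimately show ?thesis by (cases b) simp_all
qed

lemma cong_neg_one_power_mult_iff:
  fixes x :: int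
  shows "[(-1) ^ c * x = int i] (mod int p) \<longleftrightarrow>
    (if even c then [x = int i] (mod int p) else [x = - int i] (mod int p))"
  using cong_minus_minus_iff[of x "- int i" "int p"] by simp

lemma uminus_cong_self_if:
  assumes "p = 2 \<or> i = 0"
  shows "[- int i = int i] (mod int p)"
  using assms by (auto simp: cong_iff_dvd_diff)

lemma not_uminus_cong_self:
  assumes "prime p" "2 < p" "0 < i" "i < p"
  shows "\<not> [- int i = int i] (mod int p)"
proof
  assume "[- int i = int i] (mod int p)"
  then have "int p dvd int (2 * i)" by (simp add: cong_iff_dvd_diff)
  then have "p dvd 2 * i" by (simp only: int_dvd_int_iff)
  then have "p dvd 2 \<or> p dvd i" using assms(1) prime_dvd_mult_iff by blast
  then show False using assms(2-4) by (auto dest: dvd_imp_le)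
qed

lemma card_Pset:
  assumes "2 \<le> p" "powers_of p Q" "Q \<noteq> {}"
  shows "card (Pset Q) = 2 ^ card Q - 2"
proof -
  have "finite Q" using assms(2) by (simp add: powers_of_def)
  have "Pset Q = Sum ` (Pow Q - {{}, Q})" unfolding Pset_def by auto
  moreover have "inj_on Sum (Pow Q - {{}, Q})"
    using Sum_powers_of_eq_iff[OF assms(1)] powers_of_subset[OF assms(2)] by (auto intro: inj_onI)
  moreover have "card (Pow Q - {{}, Q}) = 2 ^ card Q - 2"
    using \<open>finite Q\<close> assms(3) by (simp add: card_Diff_subset card_Pow)
  ultimately show ?thesis by (simp add: card_image)
qed

lemma card_interval_diff_Pset:
  assumes "2 \<le> p" "powers_of p Q" "Q \<noteq> {}"
  shows "card ({1..<\<Sum>Q} - Pset Q) = \<Sum>Q + 1 - 2 ^ card Q"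
proof -
  have sub: "Pset Q \<subseteq> {1..<\<Sum>Q}" using Pset_eq_subset_sums[of p Q] assms by auto
  have "card (Pset Q) \<le> \<Sum>Q - 1" using card_mono[OF _ sub] by simp
  moreover have "2 \<le> (2::nat) ^ card Q"
    using assms(2,3) by (simp add: powers_of_def Suc_le_eq card_gt_0_iff self_le_power)
  ultimately show ?thesis
    using card_Diff_subset[OF finite_subset[OF sub] sub] card_Pset[OF assms] by simp
qed

text \<open>For odd \<open>p\<close> the number \<open>2 m\<close>, with \<open>m\<close> the least element of \<open>Q\<close>, has a base-\<open>p\<close> digit
  \<open>2\<close> and so is not a subset sum.\<close>
lemma interval_diff_Pset_nonempty:
  assumes "3 \<le> p" "powers_of p Q" "2 \<le> card Q"
  shows "{1..<\<Sum>Q} - Pset Q \<noteq> {}"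
proof -
  have "finite Q" using assms(2) by (simp add: powers_of_def)
  have "Q \<noteq> {}" using assms(3) by auto
  define m where "m = Min Q"
  have "m \<in> Q" and m_le: "\<forall>y\<in>Q. m \<le> y" using \<open>finite Q\<close> \<open>Q \<noteq> {}\<close> by (auto simp: m_def)
  have "0 < m" using powers_of_pos[OF assms(2) _ \<open>m \<in> Q\<close>] assms(1) by simp
  have gap: "3 * m \<le> y" if "y \<in> Q" "y \<noteq> m" for y
  proof -
    have "m \<in> range ((^) p)" "y \<in> range ((^) p)"
      using \<open>m \<in> Q\<close> \<open>y \<in> Q\<close> assms(2) by (auto simp: powers_of_def)
    then obtain e g where "m = p ^ e" "y = p ^ g" by blast
    moreover have "m < y" using m_le that by fastforce
    ultimately have "p * m \<le> y" using power_less_power_imp_mult_le[of p e g] assms(1) by simp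
    then show ?thesis using assms(1) by (meson le_trans mult_le_mono1)
  qed
  have "Q \<noteq> {m}" using assms(3) by auto
  then obtain q where "q \<in> Q" "q \<noteq> m" using \<open>m \<in> Q\<close> by blast
  then have "m + q \<le> \<Sum>Q" using \<open>m \<in> Q\<close> \<open>finite Q\<close> sum_mono2[of Q "{m, q}" "\<lambda>x. x"] by simp
  then have "2 * m \<in> {1..<\<Sum>Q}" using gap[OF \<open>q \<in> Q\<close> \<open>q \<noteq> m\<close>] \<open>0 < m\<close> by simp
  moreover have "2 * m \<notin> Pset Q"
  proof
    assume "2 * m \<in> Pset Q"
    then obtain V where V: "V \<subset> Q" "2 * m = \<Sum>V" unfolding Pset_def by blast
    have "finite V" using V(1) \<open>finite Q\<close> finite_subset by auto
    have "V \<subseteq> {m}"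
    proof
      fix v assume "v \<in> V"
      then have "v \<le> 2 * m" using V(2) member_le_Sum[OF \<open>finite V\<close>] by simp
      then show "v \<in> {m}" using gap[of v] \<open>v \<in> V\<close> V(1) \<open>0 < m\<close> by fastforce
    qed
    then have "\<Sum>V \<le> m" using sum_mono2[of "{m}" V "\<lambda>x. x"] by simp
    then show False using V(2) \<open>0 < m\<close> by simp
  qed
  ultimately show ?thesis by blast
qed

lemma c_count_eq_sum_Pset:
  assumes "prime p" "powers_of p Q" "n = \<Sum>Q" "0 < n"
  shows "c_count p i n = (\<Sum>T\<in>Pow (Pset Q). card {R. R \<subseteq> {1..<n} - Pset Q \<and>
      [(-1) ^ (card T + card R) * chi Q T = int i] (mod int p)})"
proof -
  let ?P = "Pset Q" and ?F = "{1..<n} - Pset Q"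
  let ?\<Psi> = "\<lambda>D. [(-1) ^ card D * chi Q (D \<inter> ?P) = int i] (mod int p)"
  have sub: "?P \<subseteq> {1..<n}" using Pset_eq_subset_sums[of p Q] assms by (auto simp: prime_gt_0_nat)
  have iff: "[card (lists_desc_eq {1..n} D) = i] (mod p) \<longleftrightarrow> ?\<Psi> D" if "D \<subseteq> {1..<n}" for D
  proof -
    have "[card (lists_desc_eq {1..n} D) = i] (mod p) \<longleftrightarrow>
        [int (card (lists_desc_eq {1..n} D)) = int i] (mod int p)"
      by (simp add: cong_int_iff)
    also have "\<dots> \<longleftrightarrow> ?\<Psi> D"
      using card_lists_desc_eq_cong[OF assms(1-3) that] by (meson cong_sym cong_trans)
    finally show ?thesis .
  qed
  have "?P \<union> ?F = {1..<n}" using sub by blast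
  then have "c_count p i n = card {D. D \<subseteq> ?P \<union> ?F \<and> ?\<Psi> D}"
    unfolding c_count_eq_card_descent_sets[OF assms(4)]
    by (intro arg_cong[where f = card] Collect_cong) (use iff in blast)
  also have "\<dots> = (\<Sum>T\<in>Pow ?P. card {R. R \<subseteq> ?F \<and> ?\<Psi> (T \<union> R)})"
    using finite_subset[OF sub] by (intro card_subsets_Un_disjoint) auto
  also have "\<dots> = (\<Sum>T\<in>Pow ?P. card {R. R \<subseteq> ?F \<and> [(-1) ^ (card T + card R) * chi Q T = int i] (mod int p)})"
  proof (intro sum.cong refl arg_cong[where f = card] Collect_cong conj_cong)
    fix T R assume "T \<in> Pow ?P" "R \<subseteq> ?F"
    moreover have "finite T" "finite R" using calculation sub by (auto intro: finite_subset)
    ultimately have "(T \<union> R) \<inter> ?P = T" "card (T \<union> R) = card T + card R"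
      by (auto intro: card_Un_disjoint)
    then show "?\<Psi> (T \<union> R) \<longleftrightarrow> [(-1) ^ (card T + card R) * chi Q T = int i] (mod int p)" by simp
  qed
  finally show ?thesis .
qed

lemma c_count_if_two_or_zero:
  assumes "prime p" "powers_of p Q" "Q \<noteq> {}" "n = \<Sum>Q" "p = 2 \<or> i = 0"
  shows "c_count p i n = 2 ^ (n + 1 - 2 ^ card Q) * card {T. T \<subseteq> Pset Q \<and> [chi Q T = int i] (mod int p)}"
proof -
  let ?F = "{1..<n} - Pset Q" and ?good = "\<lambda>T. [chi Q T = int i] (mod int p)"
  have "2 \<le> p" using assms(1) by (simp add: prime_ge_2_nat)
  have "0 < n" using Sum_powers_of_pos[OF assms(2)] assms(3,4) \<open>2 \<le> p\<close> by simp
  have inner: "card {R. R \<subseteq> ?F \<and> [(-1) ^ (card T + card R) * chi Q T = int i] (mod int p)} =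
      (if ?good T then 2 ^ card ?F else 0)" for T
  proof -
    have "[(-1) ^ c * chi Q T = int i] (mod int p) \<longleftrightarrow> ?good T" for c
      using cong_neg_one_power_mult_iff[of c "chi Q T" i p] uminus_cong_self_if[OF assms(5)]
      by (metis cong_sym cong_trans)
    moreover have "card {R. R \<subseteq> ?F} = 2 ^ card ?F" using card_Pow[of ?F] by (simp add: Pow_def)
    ultimately show ?thesis by simp
  qed
  have "c_count p i n = (\<Sum>T\<in>Pow (Pset Q). if ?good T then 2 ^ card ?F else 0)"
    using c_count_eq_sum_Pset[OF assms(1,2,4) \<open>0 < n\<close>] inner by simp
  also have "\<dots> = 2 ^ card ?F * card {T. T \<subseteq> Pset Q \<and> ?good T}"
    using Pset_eq_subset_sums[of p Q] assms(2) \<open>2 \<le> p\<close>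
    by (simp add: sum.inter_filter[symmetric] Pow_def)
  also have "card ?F = n + 1 - 2 ^ card Q"
    using card_interval_diff_Pset[OF \<open>2 \<le> p\<close> assms(2,3)] assms(4) by simp
  finally show ?thesis .
qed

lemma c_count_if_odd_prime_nonzero:
  assumes "prime p" "2 < p" "0 < i" "i < p" "powers_of p Q" "2 \<le> card Q" "n = \<Sum>Q"
  shows "c_count p i n = 2 ^ (n - 2 ^ card Q) * card {T. T \<subseteq> Pset Q \<and>
      ([chi Q T = int i] (mod int p) \<or> [chi Q T = - int i] (mod int p))}"
proof -
  let ?F = "{1..<n} - Pset Q"
  let ?plus = "\<lambda>T. [chi Q T = int i] (mod int p)" and ?minus = "\<lambda>T. [chi Q T = - int i] (mod int p)"
  have "2 \<le> p" "Q \<noteq> {}" using assms(2,6) by auto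
  have "?F \<noteq> {}" using interval_diff_Pset_nonempty[of p Q] assms by simp
  then have "0 < n" by auto
  have "finite ?F" by simp
  have inner: "card {R. R \<subseteq> ?F \<and> [(-1) ^ (card T + card R) * chi Q T = int i] (mod int p)} =
      (if ?plus T \<or> ?minus T then 2 ^ (card ?F - 1) else 0)" for T
  proof -
    have exclusive: "\<not> (?plus T \<and> ?minus T)"
      using not_uminus_cong_self[OF assms(1-4)] by (metis cong_sym cong_trans)
    have cond: "[(-1) ^ (card T + card R) * chi Q T = int i] (mod int p) \<longleftrightarrow>
        (if ?plus T then even (card R) = even (card T)
         else ?minus T \<and> even (card R) = odd (card T))" for R
      using cong_neg_one_power_mult_iff[of "card T + card R" "chi Q T" i p] exclusive by auto
    show ?thesis
      unfolding cond using card_subsets_even_eq[OF \<open>finite ?F\<close> \<open>?F \<noteq> {}\<close>] exclusive by auto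
  qed
  have "c_count p i n = (\<Sum>T\<in>Pow (Pset Q). if ?plus T \<or> ?minus T then 2 ^ (card ?F - 1) else 0)"
    using c_count_eq_sum_Pset[OF assms(1,5,7) \<open>0 < n\<close>] inner by simp
  also have "\<dots> = 2 ^ (card ?F - 1) * card {T. T \<subseteq> Pset Q \<and> (?plus T \<or> ?minus T)}"
    using Pset_eq_subset_sums[of p Q] assms(5) \<open>2 \<le> p\<close>
    by (simp add: sum.inter_filter[symmetric] Pow_def)
  also have "card ?F - 1 = n - 2 ^ card Q"
    using card_interval_diff_Pset[OF \<open>2 \<le> p\<close> assms(5) \<open>Q \<noteq> {}\<close>] assms(7) by simp
  finally show ?thesis .
qed

theorem corollary3p5:
  fixes p n i :: nat and ds :: "nat list"
  assumes "prime p"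
    and "sorted_wrt (<) ds"
    and "length ds > 1"
    and "n = (\<Sum>d\<leftarrow>ds. p ^ d)"
    and "i < p"
  shows "(p = 2 \<or> i = 0 \<longrightarrow>
            c_count p i n = 2 ^ (n + 1 - 2 ^ length ds) *
              card {T. T \<subseteq> Pset ((\<lambda>d. p ^ d) ` set ds) \<and>
                 [chi ((\<lambda>d. p ^ d) ` set ds) T = int i] (mod int p)})
       \<and> (p > 2 \<and> i \<in> {1..p-1} \<longrightarrow>
            c_count p i n = 2 ^ (n - 2 ^ length ds) *
              card {T. T \<subseteq> Pset ((\<lambda>d. p ^ d) ` set ds) \<and>
                 ([chi ((\<lambda>d. p ^ d) ` set ds) T = int i] (mod int p) \<or>
                  [chi ((\<lambda>d. p ^ d) ` set ds) T = - int i] (mod int p))})"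
proof -
  define Q where "Q = (\<lambda>d. p ^ d) ` set ds"
  have "2 \<le> p" using assms(1) by (simp add: prime_ge_2_nat)
  then have inj: "inj_on (\<lambda>d. p ^ d) (set ds)" by (auto intro: inj_onI)
  have "distinct ds" using assms(2) by (simp add: strict_sorted_iff)
  have Q: "powers_of p Q" by (simp add: Q_def powers_of_def image_subsetI)
  have card_Q: "card Q = length ds"
    using card_image[OF inj] distinct_card[OF \<open>distinct ds\<close>] by (simp add: Q_def)
  have n: "n = \<Sum>Q"
    using assms(4) sum_list_distinct_conv_sum_set[OF \<open>distinct ds\<close>] sum.reindex[OF inj, of id]
    by (simp add: Q_def)
  have "Q \<noteq> {}" "2 \<le> card Q" using card_Q assms(3) by auto
  show ?thesis
    unfolding Q_def[symmetric] card_Q[symmetric]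
    using c_count_if_two_or_zero[OF assms(1) Q \<open>Q \<noteq> {}\<close> n]
      c_count_if_odd_prime_nonzero[OF assms(1) _ _ assms(5) Q \<open>2 \<le> card Q\<close> n]
    by auto
qed

end
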